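(* Let $\mathbb{M}^3$ be Minkowski 3-space with inner product $\langle x,y\rangle_{\mathbb{L}}=-x_1y_1+x_2y_2+x_3y_3$. Let $\sigma=\sigma(u,v)$ be a smooth surface in $\mathbb{M}^3$ and let $\{t,n,b\}$ be smooth vector fields along $\sigma$ with $\langle t,t\rangle_{\mathbb{L}}=1$, $\langle n,n\rangle_{\mathbb{L}}=-1$, $\langle b,b\rangle_{\mathbb{L}}=1$, pairwise orthogonal, such that $\sigma_u=t$, $\sigma_v=\lambda b$ for a nowhere-vanishing function $\lambda$, and $$t_u=-\kappa n,\qquad n_u=-\kappa t-\tau b,\qquad b_u=-\tau n$$ for functions $\kappa,\tau$ (so each $u$-curve is a unit-speed spacelike curve with timelike principal normal $n$, curvature $\kappa$ and torsion $\tau$, and is a geodesic of $\sigma$). Assume there are constants $A,B$, not both zero, with $A\kappa+B\tau=1$, and that $\tau$ vanishes nowhere. Define $$\sigma^*(u,v)=\sigma(u,v)+A\,n(u,v),\qquad t^*=\frac{Bt-Ab}{\sqrt{A^2+B^2}},\qquad b^*=\frac{At+Bb}{\sqrt{A^2+B^2}},$$ and along each $u$-curve let $u^*$ be a parameter with $du^*/du=\sqrt{A^2+B^2}\,\tau$. Then: (1) $\sigma^*_u=\tau(Bt-Ab)$, so $t^*=\partial\sigma^*/\partial u^*$ is a unit spacelike vector, and $n$ is orthogonal to both $\sigma^*_u$ and $\sigma^*_v$; (2) $\|\sigma-\sigma^*\|=\sqrt{|\langle \sigma-\sigma^*,\sigma-\sigma^*\rangle_{\mathbb{L}}|}$ is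 constant, $\langle\sigma^*-\sigma,b\rangle_{\mathbb{L}}=0$, $\langle\sigma^*-\sigma,b^*\rangle_{\mathbb{L}}=0$, and $\langle b,b^*\rangle_{\mathbb{L}}=B/\sqrt{A^2+B^2}$ is constant; (3) $\partial t^*/\partial u^*=-\kappa^* n$ and $\partial b^*/\partial u^*=-\tau^* n$, where $$\kappa^*=\frac{B\kappa-A\tau}{(A^2+B^2)\tau},\qquad \tau^*=\frac{1}{(A^2+B^2)\tau}.$$
   Context: A vector $x\in\mathbb{M}^3$ is spacelike if $\langle x,x\rangle_{\mathbb{L}}>0$ or $x=0$, timelike if $\langle x,x\rangle_{\mathbb{L}}<0$. A surface of this type (spanned by a one-parameter family of geodesic Bertrand curves with constants $A,B$, $A\kappa+B\tau=1$) is called a Razzaboni surface, and the map $\sigma\mapsto\sigma^*$ satisfying properties (2) is called a Razzaboni transformation, $\sigma^*$ the dual Razzaboni surface. *)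

theory Defs
  imports "HOL-Analysis.Analysis"
begin

definition lor :: "real^3 \<Rightarrow> real^3 \<Rightarrow> real" where
  "lor x y = - (x$1 * y$1) + x$2 * y$2 + x$3 * y$3"

definition lnorm :: "real^3 \<Rightarrow> real" where
  "lnorm x = sqrt \<bar>lor x x\<bar>"

end

theory Submission
  imports Defs
begin

text \<open>
  Differentiating \<open>\<sigma> + A n\<close> along a \<open>u\<close>-curve and using the Frenet equations, the
  Bertrand relation \<open>A \<kappa> + B \<tau> = 1\<close> turns the velocity \<open>t - A(\<kappa> t + \<tau> b)\<close> into
  \<open>\<tau> (B t - A b)\<close>, a multiple of a fixed rotation of the pair \<open>(t, b)\<close> in the spacelike plane
  orthogonal to \<open>n\<close>. Hence the rotated frame \<open>(t\<^sup>*, n, b\<^sup>*)\<close> is again orthonormal, its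
  \<open>u\<close>-derivatives are multiples of \<open>n\<close>, and the speed \<open>\<tau> \<surd>(A\<^sup>2 + B\<^sup>2)\<close> of the new curve
  rescales them to the stated curvature and torsion. All metric claims are pointwise
  consequences of orthonormality; only the orthogonality of \<open>n\<close> to \<open>\<sigma>\<^sup>*\<^sub>v\<close> needs that
  differentiating \<open>\<langle>n, n\<rangle> = -1\<close> in \<open>v\<close> gives \<open>\<langle>n, n\<^sub>v\<rangle> = 0\<close>.
\<close>

lemma lor_add_left: "lor (x + y) z = lor x z + lor y z"
  by (simp add: lor_def algebra_simps)

lemma lor_add_right: "lor z (x + y) = lor z x + lor z y"
  by (simp add: lor_def algebra_simps)

lemma lor_diff_left: "lor (x - y) z = lor x z - lor y z"
  by (simp add: lor_def algebra_simps)

lemma lor_diff_right: "lor z (x - y) = lor z x - lor z y"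
  by (simp add: lor_def algebra_simps)

lemma lor_scaleR_left: "lor (c *\<^sub>R x) z = c * lor x z"
  by (simp add: lor_def algebra_simps)

lemma lor_scaleR_right: "lor z (c *\<^sub>R x) = c * lor z x"
  by (simp add: lor_def algebra_simps)

lemma lor_minus_left: "lor (- x) z = - lor x z"
  by (simp add: lor_def algebra_simps)

lemma lor_minus_right: "lor z (- x) = - lor z x"
  by (simp add: lor_def algebra_simps)

lemma lor_commute: "lor x y = lor y x"
  by (simp add: lor_def algebra_simps)

lemmas lor_simps = lor_add_left lor_add_right lor_diff_left lor_diff_right
  lor_scaleR_left lor_scaleR_right lor_minus_left lor_minus_right

lemma bounded_bilinear_lor: "bounded_bilinear lor"
proof
  fix a a' b b' :: "real^3" and r :: real
  show "lor (a + a') b = lor a b + lor a' b" by (rule lor_add_left)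
  show "lor a (b + b') = lor a b + lor a b'" by (rule lor_add_right)
  show "lor (r *\<^sub>R a) b = r *\<^sub>R lor a b" by (simp add: lor_scaleR_left)
  show "lor a (r *\<^sub>R b) = r *\<^sub>R lor a b" by (simp add: lor_scaleR_right)
next
  show "\<exists>K. \<forall>a b. norm (lor a b) \<le> norm a * norm b * K"
  proof (intro exI allI)
    fix a b :: "real^3"
    have comp: "\<bar>a$i * b$i\<bar> \<le> norm a * norm b" for i
      by (simp add: abs_mult mult_mono component_le_norm_cart)
    have "norm (lor a b) \<le> \<bar>a$1 * b$1\<bar> + \<bar>a$2 * b$2\<bar> + \<bar>a$3 * b$3\<bar>"
      by (simp add: lor_def)
    also have "\<dots> \<le> norm a * norm b * 3"
      using comp[of 1] comp[of 2] comp[of 3] by linarith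
    finally show "norm (lor a b) \<le> norm a * norm b * 3" .
  qed
qed

lemma lor_derivative_orthogonal_if_lor_self_constant:
  assumes "open S" "x \<in> S" "\<And>y. y \<in> S \<Longrightarrow> lor (f y) (f y) = c"
    and f': "(f has_vector_derivative f') (at x)"
  shows "lor (f x) f' = 0"
proof -
  have "((\<lambda>y. lor (f y) (f y)) has_vector_derivative lor (f x) f' + lor f' (f x)) (at x)"
    by (rule bounded_bilinear.has_vector_derivative[OF bounded_bilinear_lor f' f'])
  moreover have "((\<lambda>y. lor (f y) (f y)) has_vector_derivative 0) (at x)"
    by (rule has_vector_derivative_transform_within_open[OF has_vector_derivative_const assms(1,2)])
      (simp add: assms(3))
  ultimately have "lor (f x) f' + lor f' (f x) = 0"
    by (rule vector_derivative_unique_at)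
  then show ?thesis
    by (simp add: lor_commute[of f' "f x"])
qed

definition lor_frame :: "real^3 \<Rightarrow> real^3 \<Rightarrow> real^3 \<Rightarrow> bool" where
  "lor_frame t n b \<longleftrightarrow> lor t t = 1 \<and> lor n n = -1 \<and> lor b b = 1
     \<and> lor t n = 0 \<and> lor t b = 0 \<and> lor n b = 0"

lemma lor_frame_lor_self_combination:
  "lor_frame t n b \<Longrightarrow>
     lor (c *\<^sub>R (x *\<^sub>R t + y *\<^sub>R b)) (c *\<^sub>R (x *\<^sub>R t + y *\<^sub>R b)) = c\<^sup>2 * (x\<^sup>2 + y\<^sup>2)"
  by (simp add: lor_frame_def lor_simps lor_commute[of b t] power2_eq_square algebra_simps)

lemma lor_frame_normal_orthogonal_combination:
  "lor_frame t n b \<Longrightarrow> lor n (c *\<^sub>R (x *\<^sub>R t + y *\<^sub>R b)) = 0"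
  by (simp add: lor_frame_def lor_simps lor_commute[of n t])

lemma lor_frame_binormal_combination:
  "lor_frame t n b \<Longrightarrow> lor b (c *\<^sub>R (x *\<^sub>R t + y *\<^sub>R b)) = c * y"
  by (simp add: lor_frame_def lor_simps lor_commute[of b t])

lemma lor_frame_lnorm_normal:
  assumes "lor_frame t n b"
  shows "lnorm (c *\<^sub>R n) = \<bar>c\<bar>"
proof -
  have "lor (c *\<^sub>R n) (c *\<^sub>R n) = - c\<^sup>2"
    using assms by (simp add: lor_frame_def lor_scaleR_left lor_scaleR_right power2_eq_square)
  then show ?thesis
    by (simp add: lnorm_def)
qed

lemma bertrand_offset_has_vector_derivative:
  fixes \<sigma> n :: "real \<Rightarrow> 'a::real_normed_vector"
  assumes "(\<sigma> has_vector_derivative t) (at u)"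
    and "(n has_vector_derivative - \<kappa> *\<^sub>R t - \<tau> *\<^sub>R b) (at u)"
    and "A * \<kappa> + B * \<tau> = 1"
  shows "((\<lambda>u. \<sigma> u + A *\<^sub>R n u) has_vector_derivative \<tau> *\<^sub>R (B *\<^sub>R t - A *\<^sub>R b)) (at u)"
proof -
  have "((\<lambda>u. \<sigma> u + A *\<^sub>R n u) has_vector_derivative t + A *\<^sub>R (- \<kappa> *\<^sub>R t - \<tau> *\<^sub>R b)) (at u)"
    using assms(1,2)
    by (intro derivative_intros bounded_linear.has_vector_derivative[OF bounded_linear_scaleR_right])
  also have "t + A *\<^sub>R (- \<kappa> *\<^sub>R t - \<tau> *\<^sub>R b) = (1 - A * \<kappa>) *\<^sub>R t - (A * \<tau>) *\<^sub>R b"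
    by (simp add: algebra_simps)
  also have "1 - A * \<kappa> = B * \<tau>"
    using assms(3) by linarith
  finally show ?thesis
    by (simp add: algebra_simps)
qed

lemma normal_orthogonal_to_offset_derivative:
  fixes \<sigma> n :: "real \<Rightarrow> real^3"
  assumes "open V" "v \<in> V" "\<And>v'. v' \<in> V \<Longrightarrow> lor (n v') (n v') = -1"
    and "n differentiable (at v)"
    and "(\<sigma> has_vector_derivative l *\<^sub>R b) (at v)" "lor (n v) b = 0"
  shows "\<exists>w. ((\<lambda>v. \<sigma> v + A *\<^sub>R n v) has_vector_derivative w) (at v) \<and> lor (n v) w = 0"
proof -
  obtain n' where n': "(n has_vector_derivative n') (at v)"
    using assms(4) by (auto simp: differentiable_iff_scaleR has_vector_derivative_def)
  have "lor (n v) n' = 0"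
    using assms(1-3) n' by (rule lor_derivative_orthogonal_if_lor_self_constant)
  moreover have "((\<lambda>v. \<sigma> v + A *\<^sub>R n v) has_vector_derivative l *\<^sub>R b + A *\<^sub>R n') (at v)"
    using assms(5) n'
    by (intro derivative_intros bounded_linear.has_vector_derivative[OF bounded_linear_scaleR_right])
  ultimately show ?thesis
    using assms(6) by (auto simp: lor_simps)
qed

text \<open>The derivative is written as the speed \<open>q \<tau>\<close> of the dual curve times the derivative with
  respect to the dual arclength.\<close>

lemma frame_combination_has_vector_derivative:
  fixes t b :: "real \<Rightarrow> 'a::real_normed_vector"
  assumes "(t has_vector_derivative - \<kappa> *\<^sub>R N) (at u)" "(b has_vector_derivative - \<tau> *\<^sub>R N) (at u)"
    and "q \<noteq> 0" "\<tau> \<noteq> 0"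
  shows "((\<lambda>u. (1 / q) *\<^sub>R (x *\<^sub>R t u + y *\<^sub>R b u)) has_vector_derivative
           (q * \<tau>) *\<^sub>R (- ((x * \<kappa> + y * \<tau>) / (q\<^sup>2 * \<tau>)) *\<^sub>R N)) (at u)"
proof -
  have "((\<lambda>u. (1 / q) *\<^sub>R (x *\<^sub>R t u + y *\<^sub>R b u)) has_vector_derivative
           (1 / q) *\<^sub>R (x *\<^sub>R (- \<kappa> *\<^sub>R N) + y *\<^sub>R (- \<tau> *\<^sub>R N))) (at u)"
    using assms(1,2)
    by (intro derivative_intros bounded_linear.has_vector_derivative[OF bounded_linear_scaleR_right])
  moreover have "(1 / q) *\<^sub>R (x *\<^sub>R (- \<kappa> *\<^sub>R N) + y *\<^sub>R (- \<tau> *\<^sub>R N))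
      = (1 / q * (- (x * \<kappa>) + - (y * \<tau>))) *\<^sub>R N"
    by (simp add: algebra_simps diff_divide_distrib)
  moreover have "1 / q * (- (x * \<kappa>) + - (y * \<tau>)) = q * \<tau> * - ((x * \<kappa> + y * \<tau>) / (q\<^sup>2 * \<tau>))"
    using assms(3,4) by (simp add: field_simps power2_eq_square)
  ultimately show ?thesis
    by simp
qed

lemma has_vector_derivative_reparametrize_by_speed:
  assumes "(f has_vector_derivative c *\<^sub>R f') (at (\<phi> s))" "(\<phi> has_real_derivative 1 / c) (at s)"
    and "c \<noteq> 0"
  shows "((\<lambda>s. f (\<phi> s)) has_vector_derivative f') (at s)"
proof -
  have "((f \<circ> \<phi>) has_vector_derivative (1 / c) *\<^sub>R (c *\<^sub>R f')) (at s)"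
    using assms(1,2) by (intro vector_diff_chain_at) (simp_all add: has_real_derivative_iff_has_vector_derivative)
  then show ?thesis
    using assms(3) by (simp add: o_def)
qed

theorem mainTheorem1:
  fixes U :: "(real \<times> real) set"
    and \<sigma> t n b :: "real \<times> real \<Rightarrow> real^3"
    and lam \<kappa> \<tau> :: "real \<times> real \<Rightarrow> real"
    and A B :: real
  assumes U_open: "open U"
    and orth: "\<And>p. p \<in> U \<Longrightarrow> lor (t p) (t p) = 1 \<and> lor (n p) (n p) = -1 \<and> lor (b p) (b p) = 1
                 \<and> lor (t p) (n p) = 0 \<and> lor (t p) (b p) = 0 \<and> lor (n p) (b p) = 0"
    and sigma_u: "\<And>u v. (u,v) \<in> U \<Longrightarrow> ((\<lambda>u. \<sigma> (u,v)) has_vector_derivative t (u,v)) (at u)"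
    and sigma_v: "\<And>u v. (u,v) \<in> U \<Longrightarrow> ((\<lambda>v. \<sigma> (u,v)) has_vector_derivative lam (u,v) *\<^sub>R b (u,v)) (at v)"
    and lam_nz: "\<And>p. p \<in> U \<Longrightarrow> lam p \<noteq> 0"
    and t_u: "\<And>u v. (u,v) \<in> U \<Longrightarrow> ((\<lambda>u. t (u,v)) has_vector_derivative - \<kappa> (u,v) *\<^sub>R n (u,v)) (at u)"
    and n_u: "\<And>u v. (u,v) \<in> U \<Longrightarrow> ((\<lambda>u. n (u,v)) has_vector_derivative
                 - \<kappa> (u,v) *\<^sub>R t (u,v) - \<tau> (u,v) *\<^sub>R b (u,v)) (at u)"
    and b_u: "\<And>u v. (u,v) \<in> U \<Longrightarrow> ((\<lambda>u. b (u,v)) has_vector_derivative - \<tau> (u,v) *\<^sub>R n (u,v)) (at u)"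
    and n_v: "\<And>u v. (u,v) \<in> U \<Longrightarrow> (\<lambda>v. n (u,v)) differentiable (at v)"
    and AB: "A \<noteq> 0 \<or> B \<noteq> 0"
    and bertrand: "\<And>p. p \<in> U \<Longrightarrow> A * \<kappa> p + B * \<tau> p = 1"
    and tau_nz: "\<And>p. p \<in> U \<Longrightarrow> \<tau> p \<noteq> 0"
  defines "\<sigma>s \<equiv> (\<lambda>p. \<sigma> p + A *\<^sub>R n p)"
    and "ts \<equiv> (\<lambda>p. (1 / sqrt (A\<^sup>2 + B\<^sup>2)) *\<^sub>R (B *\<^sub>R t p - A *\<^sub>R b p))"
    and "bs \<equiv> (\<lambda>p. (1 / sqrt (A\<^sup>2 + B\<^sup>2)) *\<^sub>R (A *\<^sub>R t p + B *\<^sub>R b p))"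
    and "\<kappa>s \<equiv> (\<lambda>p. (B * \<kappa> p - A * \<tau> p) / ((A\<^sup>2 + B\<^sup>2) * \<tau> p))"
    and "\<tau>s \<equiv> (\<lambda>p. 1 / ((A\<^sup>2 + B\<^sup>2) * \<tau> p))"
  shows
    \<comment> \<open>(1)\<close>
    "(\<forall>u v. (u,v) \<in> U \<longrightarrow>
        ((\<lambda>u. \<sigma>s (u,v)) has_vector_derivative \<tau> (u,v) *\<^sub>R (B *\<^sub>R t (u,v) - A *\<^sub>R b (u,v))) (at u)
      \<and> lor (ts (u,v)) (ts (u,v)) = 1
      \<and> lor (n (u,v)) (\<tau> (u,v) *\<^sub>R (B *\<^sub>R t (u,v) - A *\<^sub>R b (u,v))) = 0
      \<and> (\<exists>w. ((\<lambda>v. \<sigma>s (u,v)) has_vector_derivative w) (at v) \<and> lor (n (u,v)) w = 0))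
   \<and> (\<forall>v \<phi> S s. open S \<and> s \<in> S \<and> (\<forall>s'\<in>S. (\<phi> s', v) \<in> U \<and>
          (\<phi> has_real_derivative 1 / (sqrt (A\<^sup>2 + B\<^sup>2) * \<tau> (\<phi> s', v))) (at s')) \<longrightarrow>
        ((\<lambda>s. \<sigma>s (\<phi> s, v)) has_vector_derivative ts (\<phi> s, v)) (at s))
    \<comment> \<open>(2)\<close>
   \<and> (\<exists>c. \<forall>p\<in>U. lnorm (\<sigma> p - \<sigma>s p) = c)
   \<and> (\<forall>p\<in>U. lor (\<sigma>s p - \<sigma> p) (b p) = 0 \<and> lor (\<sigma>s p - \<sigma> p) (bs p) = 0
        \<and> lor (b p) (bs p) = B / sqrt (A\<^sup>2 + B\<^sup>2))
    \<comment> \<open>(3)\<close>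
   \<and> (\<forall>v \<phi> S s. open S \<and> s \<in> S \<and> (\<forall>s'\<in>S. (\<phi> s', v) \<in> U \<and>
          (\<phi> has_real_derivative 1 / (sqrt (A\<^sup>2 + B\<^sup>2) * \<tau> (\<phi> s', v))) (at s')) \<longrightarrow>
        ((\<lambda>s. ts (\<phi> s, v)) has_vector_derivative - \<kappa>s (\<phi> s, v) *\<^sub>R n (\<phi> s, v)) (at s)
      \<and> ((\<lambda>s. bs (\<phi> s, v)) has_vector_derivative - \<tau>s (\<phi> s, v) *\<^sub>R n (\<phi> s, v)) (at s))"
proof -
  define q where "q = sqrt (A\<^sup>2 + B\<^sup>2)"
  have q_pos: "q > 0"
    using AB by (simp add: q_def sum_power2_gt_zero_iff)
  have q_sq: "q\<^sup>2 = A\<^sup>2 + B\<^sup>2"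
    by (simp add: q_def)
  have frame: "lor_frame (t p) (n p) (b p)" if "p \<in> U" for p
    using orth[OF that] by (simp add: lor_frame_def)
  have ts_eq: "ts p = (1 / q) *\<^sub>R (B *\<^sub>R t p + (- A) *\<^sub>R b p)" for p
    by (simp add: ts_def q_def)
  have bs_eq: "bs p = (1 / q) *\<^sub>R (A *\<^sub>R t p + B *\<^sub>R b p)" for p
    by (simp add: bs_def q_def)
  have \<sigma>s_u: "((\<lambda>u. \<sigma>s (u,v)) has_vector_derivative \<tau> (u,v) *\<^sub>R (B *\<^sub>R t (u,v) - A *\<^sub>R b (u,v))) (at u)"
    if "(u,v) \<in> U" for u v
    unfolding \<sigma>s_def
    by (rule bertrand_offset_has_vector_derivative[OF sigma_u[OF that] n_u[OF that] bertrand[OF that]])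
  have \<sigma>s_v: "\<exists>w. ((\<lambda>v. \<sigma>s (u,v)) has_vector_derivative w) (at v) \<and> lor (n (u,v)) w = 0"
    if "(u,v) \<in> U" for u v
    unfolding \<sigma>s_def
  proof (rule normal_orthogonal_to_offset_derivative)
    show "open (Pair u -` U)"
      using U_open by (intro open_vimage continuous_intros)
  qed (use that orth n_v sigma_v frame in \<open>auto simp: lor_frame_def\<close>)
  have ts_u: "((\<lambda>u. ts (u,v)) has_vector_derivative (q * \<tau> (u,v)) *\<^sub>R (- \<kappa>s (u,v) *\<^sub>R n (u,v))) (at u)"
    if "(u,v) \<in> U" for u v
    using frame_combination_has_vector_derivative[OF t_u[OF that] b_u[OF that], of q B "- A"]
      q_pos tau_nz[OF that]
    by (simp add: ts_eq \<kappa>s_def q_sq)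
  have bs_u: "((\<lambda>u. bs (u,v)) has_vector_derivative (q * \<tau> (u,v)) *\<^sub>R (- \<tau>s (u,v) *\<^sub>R n (u,v))) (at u)"
    if "(u,v) \<in> U" for u v
    using frame_combination_has_vector_derivative[OF t_u[OF that] b_u[OF that], of q A B]
      q_pos tau_nz[OF that]
    by (simp add: bs_eq \<tau>s_def q_sq bertrand[OF that])
  have \<sigma>s_u_speed: "((\<lambda>u. \<sigma>s (u,v)) has_vector_derivative (q * \<tau> (u,v)) *\<^sub>R ts (u,v)) (at u)"
    if "(u,v) \<in> U" for u v
    using \<sigma>s_u[OF that] q_pos by (simp add: ts_eq)
  have along_u_star: "((\<lambda>s. F (\<phi> s, v)) has_vector_derivative G (\<phi> s, v)) (at s)"
    if F_u: "\<And>u. (u,v) \<in> U \<Longrightarrow> ((\<lambda>u. F (u,v)) has_vector_derivative (q * \<tau> (u,v)) *\<^sub>R G (u,v)) (at u)"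
      and "s \<in> S"
      and \<phi>: "\<forall>s'\<in>S. (\<phi> s', v) \<in> U \<and>
          (\<phi> has_real_derivative 1 / (sqrt (A\<^sup>2 + B\<^sup>2) * \<tau> (\<phi> s', v))) (at s')"
    for F G :: "real \<times> real \<Rightarrow> real^3" and v \<phi> S s
  proof -
    have on_U: "(\<phi> s, v) \<in> U"
      and speed: "(\<phi> has_real_derivative 1 / (q * \<tau> (\<phi> s, v))) (at s)"
      using \<phi> \<open>s \<in> S\<close> by (simp_all add: q_def)
    show ?thesis
      using q_pos tau_nz[OF on_U]
      by (intro has_vector_derivative_reparametrize_by_speed[OF F_u[OF on_U] speed]) simp
  qed
  have ts_unit: "lor (ts p) (ts p) = 1" if "p \<in> U" for p
    using lor_frame_lor_self_combination[OF frame[OF that], of "1 / q" B "- A"] q_pos q_sq AB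
    by (simp add: ts_eq power_divide add.commute)
  have normal_orthogonal_velocity: "lor (n p) (\<tau> p *\<^sub>R (B *\<^sub>R t p - A *\<^sub>R b p)) = 0"
    if "p \<in> U" for p
    using lor_frame_normal_orthogonal_combination[OF frame[OF that], of "\<tau> p" B "- A"] by simp
  have offset: "\<sigma>s p - \<sigma> p = A *\<^sub>R n p" for p
    by (simp add: \<sigma>s_def)
  have lnorm_offset: "lnorm (\<sigma> p - \<sigma>s p) = \<bar>A\<bar>" if "p \<in> U" for p
    using lor_frame_lnorm_normal[OF frame[OF that], of "- A"] by (simp add: \<sigma>s_def)
  have offset_orthogonal_b: "lor (\<sigma>s p - \<sigma> p) (b p) = 0" if "p \<in> U" for p
    using frame[OF that] by (simp add: offset lor_scaleR_left lor_frame_def)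
  have offset_orthogonal_bs: "lor (\<sigma>s p - \<sigma> p) (bs p) = 0" if "p \<in> U" for p
    using lor_frame_normal_orthogonal_combination[OF frame[OF that]]
    by (simp add: offset bs_eq lor_scaleR_left)
  have lor_b_bs: "lor (b p) (bs p) = B / sqrt (A\<^sup>2 + B\<^sup>2)" if "p \<in> U" for p
    using lor_frame_binormal_combination[OF frame[OF that], of "1 / q" A B]
    by (simp add: bs_eq q_def)
  show ?thesis
    by (intro conjI allI impI ballI exI[of _ "\<bar>A\<bar>"]; (elim conjE)?;
        rule \<sigma>s_u ts_unit normal_orthogonal_velocity \<sigma>s_v lnorm_offset offset_orthogonal_b
          offset_orthogonal_bs lor_b_bs along_u_star[OF \<sigma>s_u_speed] along_u_star[OF ts_u]
          along_u_star[OF bs_u];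
        assumption)
qed

end
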